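(* Let $S$ be an inverse semigroup. If $S$ is DSC, then $S$ is a group.
   Context: An inverse semigroup is a semigroup in which every element $s$ has a unique $t$ with $sts=s$ and $tst=t$. A diagonal subsemigroup of $S\times S$ is a subsemigroup containing $\{(s,s)\colon s\in S\}$; a congruence is a symmetric and transitive diagonal subsemigroup; $S$ is DSC if every diagonal subsemigroup of $S\times S$ is a congruence on $S$. *)

theory Defs
  imports Main
begin

text \<open>The semigroup S is the whole carrier type 'a of class semigroup_mult.\<close>

definition inverse_semigroup :: "('a::semigroup_mult) itself \<Rightarrow> bool" where
  "inverse_semigroup _ \<longleftrightarrow> (\<forall>s::'a. \<exists>!t. s * t * s = s \<and> t * s * t = t)"

definition diagonal_subsemigroup :: "('a::semigroup_mult \<times> 'a) set \<Rightarrow> bool" where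
  "diagonal_subsemigroup R \<longleftrightarrow>
     (\<forall>s. (s, s) \<in> R) \<and>
     (\<forall>a b c d. (a, b) \<in> R \<longrightarrow> (c, d) \<in> R \<longrightarrow> (a * c, b * d) \<in> R)"

definition congruence_rel :: "('a::semigroup_mult \<times> 'a) set \<Rightarrow> bool" where
  "congruence_rel R \<longleftrightarrow> diagonal_subsemigroup R \<and> sym R \<and> trans R"

definition DSC :: "('a::semigroup_mult) itself \<Rightarrow> bool" where
  "DSC _ \<longleftrightarrow> (\<forall>R :: ('a \<times> 'a) set. diagonal_subsemigroup R \<longrightarrow> congruence_rel R)"

definition is_group :: "('a::semigroup_mult) itself \<Rightarrow> bool" where
  "is_group _ \<longleftrightarrow> (\<exists>e::'a. (\<forall>x. e * x = x \<and> x * e = x) \<and> (\<forall>x. \<exists>y. x * y = e \<and> y * x = e))"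

end

theory Submission
  imports Defs
begin

text \<open>In an inverse semigroup the idempotents commute, and for every idempotent \<open>f\<close> and
  element \<open>b\<close> there is an idempotent \<open>g\<close> with \<open>b f = g b\<close>. Hence the relation
  \<open>{(e b, b) | e idempotent}\<close> is a diagonal subsemigroup. If it is symmetric, then
  \<open>e f = f\<close> for all idempotents \<open>e, f\<close>, so there is only one idempotent, and an inverse
  semigroup with a single idempotent is a group.\<close>

lemma inverse_semigroup_inverse_unique:
  assumes "inverse_semigroup TYPE('a::semigroup_mult)"
    and "s * t * s = s" "t * s * t = t" "s * u * s = s" "u * s * u = (u::'a)"
  shows "t = u"
  using assms unfolding inverse_semigroup_def by blast

lemma inverse_semigroup_inverse_exists:
  fixes s :: "'a::semigroup_mult"
  assumes "inverse_semigroup TYPE('a)"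
  obtains t where "s * t * s = s" "t * s * t = t"
  using assms unfolding inverse_semigroup_def by blast

lemma idempotent_mult_inverse:
  assumes "s * t * s = s" "t * s * t = (t::'a::semigroup_mult)"
  shows "(s * t) * (s * t) = s * t" and "(t * s) * (t * s) = t * s"
  using assms by (metis mult.assoc)+

lemma inverse_semigroup_idempotent_mult_idempotent:
  assumes IS: "inverse_semigroup TYPE('a::semigroup_mult)"
    and e: "e * e = (e::'a)" and f: "f * f = f"
  shows "(e * f) * (e * f) = e * f"
proof -
  obtain x where x: "e * f * x * (e * f) = e * f" "x * (e * f) * x = x"
    using inverse_semigroup_inverse_exists[OF IS] .
  \<comment> \<open>\<open>f x e\<close> is another inverse of \<open>e f\<close>, so \<open>x = f x e\<close>, which makes \<open>x\<close> idempotent;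
    an idempotent is its own unique inverse, hence \<open>e f = x\<close>.\<close>
  have "e * f * (f * x * e) * (e * f) = e * f"
    using x(1) e f by (metis mult.assoc)
  moreover have "(f * x * e) * (e * f) * (f * x * e) = f * x * e"
    using x(2) e f by (metis mult.assoc)
  ultimately have x_eq: "x = f * x * e"
    using inverse_semigroup_inverse_unique[OF IS x] by blast
  have x_idem: "x * x = x"
  proof -
    have "x * x = f * (x * (e * f) * x) * e" using x_eq by (metis mult.assoc)
    then show ?thesis using x(2) x_eq by simp
  qed
  then have "x * x * x = x" by simp
  then have "e * f = x"
    using inverse_semigroup_inverse_unique[OF IS x(2) x(1), of x] by simp
  then show ?thesis using x_idem by simp
qed

lemma inverse_semigroup_idempotents_commute:
  assumes IS: "inverse_semigroup TYPE('a::semigroup_mult)"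
    and e: "e * e = (e::'a)" and f: "f * f = f"
  shows "e * f = f * e"
proof -
  have ef: "(e * f) * (e * f) = e * f"
    using inverse_semigroup_idempotent_mult_idempotent[OF IS e f] .
  have fe: "(f * e) * (f * e) = f * e"
    using inverse_semigroup_idempotent_mult_idempotent[OF IS f e] .
  \<comment> \<open>Both \<open>f e\<close> and \<open>e f\<close> are inverses of the idempotent \<open>e f\<close>.\<close>
  have "e * f * (f * e) * (e * f) = e * f" using e f ef by (metis mult.assoc)
  moreover have "(f * e) * (e * f) * (f * e) = f * e" using e f fe by (metis mult.assoc)
  moreover have "e * f * (e * f) * (e * f) = e * f" using ef by simp
  ultimately show ?thesis
    using inverse_semigroup_inverse_unique[OF IS] by blast
qed

lemma inverse_semigroup_idempotent_conjugate:
  assumes IS: "inverse_semigroup TYPE('a::semigroup_mult)" and f: "f * f = (f::'a)"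
  obtains g where "g * g = g" and "b * f = g * b"
proof -
  obtain b' where b': "b * b' * b = b" "b' * b * b' = b'"
    using inverse_semigroup_inverse_exists[OF IS] .
  have "f * (b' * b) = (b' * b) * f"
    using inverse_semigroup_idempotents_commute[OF IS f idempotent_mult_inverse(2)[OF b']] .
  then have conj: "(b * f * b') * b = b * f"
    using b'(1) by (metis mult.assoc)
  moreover have "(b * f * b') * (b * f * b') = b * f * b'"
    using conj f by (metis mult.assoc)
  ultimately show ?thesis using that by metis
qed

definition idempotent_left_multiples :: "('a::semigroup_mult \<times> 'a) set" where
  "idempotent_left_multiples = {(e * b, b) | e b. e * e = e}"

lemma diagonal_subsemigroup_idempotent_left_multiples:
  assumes IS: "inverse_semigroup TYPE('a::semigroup_mult)"
  shows "diagonal_subsemigroup (idempotent_left_multiples :: ('a \<times> 'a) set)"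
  unfolding diagonal_subsemigroup_def
proof (intro conjI allI impI)
  fix s :: 'a
  obtain s' where s': "s * s' * s = s" "s' * s * s' = s'"
    using inverse_semigroup_inverse_exists[OF IS] .
  have "(s * s' * s, s) \<in> idempotent_left_multiples"
    using idempotent_mult_inverse(1)[OF s'] unfolding idempotent_left_multiples_def by blast
  then show "(s, s) \<in> idempotent_left_multiples" using s'(1) by simp
next
  fix a b c d :: 'a
  assume "(a, b) \<in> idempotent_left_multiples" "(c, d) \<in> idempotent_left_multiples"
  then obtain e f where e: "e * e = e" "a = e * b" and f: "f * f = f" "c = f * d"
    unfolding idempotent_left_multiples_def by blast
  obtain g where g: "g * g = g" "b * f = g * b"
    using inverse_semigroup_idempotent_conjugate[OF IS f(1)] .
  have "a * c = (e * g) * (b * d)" using e f g by (metis mult.assoc)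
  moreover have "(e * g) * (e * g) = e * g"
    using inverse_semigroup_idempotent_mult_idempotent[OF IS e(1) g(1)] .
  ultimately show "(a * c, b * d) \<in> idempotent_left_multiples"
    unfolding idempotent_left_multiples_def by blast
qed

lemma inverse_semigroup_idempotent_unique:
  assumes IS: "inverse_semigroup TYPE('a::semigroup_mult)"
    and sym: "sym (idempotent_left_multiples :: ('a \<times> 'a) set)"
    and e: "e * e = (e::'a)" and f: "f * f = f"
  shows "e = f"
proof -
  have absorb: "x * y = y" if x: "x * x = (x::'a)" and y: "y * y = y" for x y
  proof -
    have "(x * y, y) \<in> idempotent_left_multiples"
      using x unfolding idempotent_left_multiples_def by blast
    then have "(y, x * y) \<in> idempotent_left_multiples" using sym by (meson symD)
    then obtain g where g: "g * g = g" "y = g * (x * y)"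
      unfolding idempotent_left_multiples_def by auto
    have "x * y = x * g * (x * y)" using g(2) by (simp add: mult.assoc)
    also have "\<dots> = g * (x * x) * y"
      using inverse_semigroup_idempotents_commute[OF IS x g(1)] by (simp add: mult.assoc)
    also have "\<dots> = y" using x g(2) by (simp add: mult.assoc)
    finally show ?thesis .
  qed
  show ?thesis
    using absorb[OF e f] absorb[OF f e] inverse_semigroup_idempotents_commute[OF IS e f]
    by simp
qed

lemma inverse_semigroup_single_idempotent_is_group:
  assumes IS: "inverse_semigroup TYPE('a::semigroup_mult)"
    and unique: "\<And>e f :: 'a. e * e = e \<Longrightarrow> f * f = f \<Longrightarrow> e = f"
  shows "is_group TYPE('a)"
proof -
  obtain z z' :: 'a where z: "z * z' * z = z" "z' * z * z' = z'"
    using inverse_semigroup_inverse_exists[OF IS] by metis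
  define u where "u = z * z'"
  have u: "u * u = u" unfolding u_def using idempotent_mult_inverse(1)[OF z] .
  have "u * x = x \<and> x * u = x \<and> (\<exists>y. x * y = u \<and> y * x = u)" for x :: 'a
  proof -
    obtain x' where x': "x * x' * x = x" "x' * x * x' = x'"
      using inverse_semigroup_inverse_exists[OF IS] .
    have "x * x' = u" "x' * x = u"
      using unique[OF idempotent_mult_inverse(1)[OF x'] u]
        unique[OF idempotent_mult_inverse(2)[OF x'] u] by simp_all
    with x' show ?thesis by (metis mult.assoc)
  qed
  then show ?thesis unfolding is_group_def by blast
qed

theorem mainTheorem8:
  assumes "inverse_semigroup TYPE('a::semigroup_mult)"
      and "DSC TYPE('a)"
  shows "is_group TYPE('a)"
proof -
  have "congruence_rel (idempotent_left_multiples :: ('a \<times> 'a) set)"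
    using assms(2) diagonal_subsemigroup_idempotent_left_multiples[OF assms(1)]
    unfolding DSC_def by blast
  then have "sym (idempotent_left_multiples :: ('a \<times> 'a) set)"
    unfolding congruence_rel_def by blast
  then show ?thesis
    using inverse_semigroup_single_idempotent_is_group[OF assms(1)]
      inverse_semigroup_idempotent_unique[OF assms(1)] by blast
qed

end
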